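(* Let $f_1=f_1^{\mathrm s}+f_1^{\mathrm n}$ and $f_2=f_2^{\mathrm s}+f_2^{\mathrm n}$ be noisy processes (with noise variances $\sigma_1^2,\sigma_2^2>0$). If for every tuple $\mathbf x$ of pairwise distinct inputs $(f_1(x_1),\dots,f_1(x_{|\mathbf x|}))\overset{d}{=}(f_2(x_1),\dots,f_2(x_{|\mathbf x|}))$, then for every such $\mathbf x$ also $f_1^{\mathrm s}(\mathbf x)\overset{d}{=}f_2^{\mathrm s}(\mathbf x)$ and $f_1^{\mathrm n}(\mathbf x)\overset{d}{=}f_2^{\mathrm n}(\mathbf x)$ (where $g(\mathbf x)=(g(x_1),\dots,g(x_{|\mathbf x|}))$).
   Context: A stochastic process $f$ on $\mathbb R$ is called noisy with noise variance $\sigma^2>0$ if $f=f^{\mathrm s}+f^{\mathrm n}$ where $f^{\mathrm s}$ and $f^{\mathrm n}$ are independent processes, $f^{\mathrm s}$ (the smooth part) has continuous sample paths, and $f^{\mathrm n}$ (the noisy part) satisfies $(f^{\mathrm n}(x_1),\dots,f^{\mathrm n}(x_n))\sim\mathcal N(\mathbf 0,\sigma^2\mathbf I_n)$ for every tuple $(x_1,\dots,x_n)$ of pairwise distinct reals. *)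

theory Defs
  imports "HOL-Probability.Probability"
begin

text \<open>A real-valued stochastic process on the real line, defined on a probability
space M, is modelled as f :: real => 'a => real (f x is the random variable at input x).\<close>

definition fin_distr :: "'a measure \<Rightarrow> (real \<Rightarrow> 'a \<Rightarrow> real) \<Rightarrow> nat \<Rightarrow> (nat \<Rightarrow> real) \<Rightarrow> (nat \<Rightarrow> real) measure" where
  "fin_distr M f n x = distr M (PiM {..<n} (\<lambda>_. borel)) (\<lambda>\<omega>. \<lambda>i\<in>{..<n}. f (x i) \<omega>)"

definition noisy_process ::
  "'a measure \<Rightarrow> (real \<Rightarrow> 'a \<Rightarrow> real) \<Rightarrow> (real \<Rightarrow> 'a \<Rightarrow> real) \<Rightarrow> (real \<Rightarrow> 'a \<Rightarrow> real) \<Rightarrow> real \<Rightarrow> bool" where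
  "noisy_process M f fs fn s2 \<longleftrightarrow>
     prob_space M \<and> s2 > 0 \<and>
     (\<forall>x. fs x \<in> borel_measurable M) \<and> (\<forall>x. fn x \<in> borel_measurable M) \<and>
     (\<forall>x. \<forall>\<omega>\<in>space M. f x \<omega> = fs x \<omega> + fn x \<omega>) \<and>
     prob_space.indep_var M (PiM UNIV (\<lambda>_. borel)) (\<lambda>\<omega> x. fs x \<omega>)
                            (PiM UNIV (\<lambda>_. borel)) (\<lambda>\<omega> x. fn x \<omega>) \<and>
     (\<forall>\<omega>\<in>space M. continuous_on UNIV (\<lambda>x. fs x \<omega>)) \<and>
     (\<forall>n x. inj_on x {..<n} \<longrightarrow>
        fin_distr M fn n x = PiM {..<n} (\<lambda>_. density lborel (normal_density 0 (sqrt s2))))"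

end

theory Submission
  imports Defs
begin

text \<open>
  Fix pairwise distinct inputs \<open>x\<^sub>0, \<dots>, x\<^sub>n\<^sub>-\<^sub>1\<close> and place \<open>m + 1\<close> inputs
  \<open>x\<^sub>i + k h\<^sub>m\<close> (\<open>k \<le> m\<close>) next to each of them, where \<open>m h\<^sub>m \<rightarrow> 0\<close> and \<open>h\<^sub>m\<close> is so small
  that all these inputs are distinct. The average of \<open>f\<close> over the block at \<open>x\<^sub>i\<close> is the
  average of the smooth part, which tends to \<open>f\<^sup>s(x\<^sub>i)\<close> by continuity of the sample paths,
  plus the average of \<open>m + 1\<close> independent \<open>N(0, \<sigma>\<^sup>2)\<close> noise values, which tends to \<open>0\<close> in
  probability by Chebyshev's inequality. So the block averages converge in probability to
  \<open>f\<^sup>s(x\<^sub>i)\<close>, and \<open>f(x\<^sub>i)\<close> minus them to \<open>f\<^sup>n(x\<^sub>i)\<close>. Both are measurable functions of a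
  finite-dimensional marginal of \<open>f\<close>, hence have the same joint law for \<open>f\<^sub>1\<close> and \<open>f\<^sub>2\<close>, and
  convergence in probability carries this equality, via joint distribution functions, over to
  the limits.
\<close>

lemma noisy_processD:
  assumes "noisy_process M f fs fn s"
  shows "prob_space M" "s > 0" "\<And>x. fs x \<in> borel_measurable M" "\<And>x. fn x \<in> borel_measurable M"
    "\<And>x \<omega>. \<omega> \<in> space M \<Longrightarrow> f x \<omega> = fs x \<omega> + fn x \<omega>"
    "\<And>\<omega>. \<omega> \<in> space M \<Longrightarrow> continuous_on UNIV (\<lambda>x. fs x \<omega>)"
    "\<And>n x. inj_on x {..<n} \<Longrightarrow>
       fin_distr M fn n x = PiM {..<n} (\<lambda>_. density lborel (normal_density 0 (sqrt s)))"
  using assms unfolding noisy_process_def by auto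

lemma noisy_process_measurable:
  assumes "noisy_process M f fs fn s"
  shows "f x \<in> borel_measurable M"
proof -
  have "(\<lambda>\<omega>. fs x \<omega> + fn x \<omega>) \<in> borel_measurable M"
    using noisy_processD[OF assms] by measurable
  then show ?thesis
    by (rule measurable_cong[THEN iffD1, rotated]) (simp add: noisy_processD(5)[OF assms])
qed

section \<open>Convergence in probability\<close>

definition converges_in_prob :: "'a measure \<Rightarrow> (nat \<Rightarrow> 'a \<Rightarrow> real) \<Rightarrow> ('a \<Rightarrow> real) \<Rightarrow> bool" where
  "converges_in_prob M Y Z \<longleftrightarrow>
     (\<forall>e>0. (\<lambda>m. measure M {\<omega>\<in>space M. e < \<bar>Y m \<omega> - Z \<omega>\<bar>}) \<longlonglongrightarrow> 0)"

lemma converges_in_prob_if_pointwise: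
  assumes "prob_space M" and [measurable]: "\<And>m. Y m \<in> borel_measurable M" "Z \<in> borel_measurable M"
    and lim: "\<And>\<omega>. \<omega> \<in> space M \<Longrightarrow> (\<lambda>m. Y m \<omega>) \<longlonglongrightarrow> Z \<omega>"
  shows "converges_in_prob M Y Z"
  unfolding converges_in_prob_def
proof (intro allI impI)
  fix e :: real assume e: "e > 0"
  interpret prob_space M by fact
  define B where "B m = {\<omega>\<in>space M. \<exists>k\<ge>m. e < \<bar>Y k \<omega> - Z \<omega>\<bar>}" for m
  have "B m \<in> sets M" for m
    unfolding B_def by measurable
  then have B_sets: "range B \<subseteq> sets M"
    by blast
  have "decseq B"
    by (rule decseq_SucI) (auto simp: B_def intro: Suc_leD)
  moreover have "(\<Inter>m. B m) = {}"
  proof (intro equals0I)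
    fix \<omega> assume \<omega>: "\<omega> \<in> (\<Inter>m. B m)"
    then have "\<omega> \<in> space M"
      by (auto simp: B_def)
    with lim e obtain m where "\<forall>k\<ge>m. \<bar>Y k \<omega> - Z \<omega>\<bar> < e"
      unfolding LIMSEQ_iff by (fastforce simp: dist_real_def)
    moreover from \<omega> obtain k where "k \<ge> m" "e < \<bar>Y k \<omega> - Z \<omega>\<bar>"
      by (auto simp: B_def)
    ultimately show False
      by fastforce
  qed
  ultimately have lim_B: "(\<lambda>m. measure M (B m)) \<longlonglongrightarrow> 0"
    using finite_Lim_measure_decseq[OF B_sets] by simp
  have "measure M {\<omega>\<in>space M. e < \<bar>Y m \<omega> - Z \<omega>\<bar>} \<le> measure M (B m)" for m
    using B_sets by (intro finite_measure_mono) (auto simp: B_def)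
  then show "(\<lambda>m. measure M {\<omega>\<in>space M. e < \<bar>Y m \<omega> - Z \<omega>\<bar>}) \<longlonglongrightarrow> 0"
    by (intro tendsto_sandwich[OF always_eventually always_eventually tendsto_const lim_B]) simp_all
qed

lemma converges_in_prob_add:
  assumes "prob_space M"
    and [measurable]: "\<And>m. Y m \<in> borel_measurable M" "\<And>m. Y' m \<in> borel_measurable M"
      "Z \<in> borel_measurable M" "Z' \<in> borel_measurable M"
    and Y: "converges_in_prob M Y Z" and Y': "converges_in_prob M Y' Z'"
  shows "converges_in_prob M (\<lambda>m \<omega>. Y m \<omega> + Y' m \<omega>) (\<lambda>\<omega>. Z \<omega> + Z' \<omega>)"
  unfolding converges_in_prob_def
proof (intro allI impI)
  fix e :: real assume "e > 0"
  interpret prob_space M by fact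
  let ?A = "\<lambda>m. {\<omega>\<in>space M. e/2 < \<bar>Y m \<omega> - Z \<omega>\<bar>}"
  let ?A' = "\<lambda>m. {\<omega>\<in>space M. e/2 < \<bar>Y' m \<omega> - Z' \<omega>\<bar>}"
  have "e/2 > 0"
    using \<open>e > 0\<close> by simp
  then have "(\<lambda>m. measure M (?A m) + measure M (?A' m)) \<longlonglongrightarrow> 0 + 0"
    using Y Y' unfolding converges_in_prob_def by (intro tendsto_add) blast+
  then have lim_A: "(\<lambda>m. measure M (?A m) + measure M (?A' m)) \<longlonglongrightarrow> 0"
    by simp
  have "measure M {\<omega>\<in>space M. e < \<bar>(Y m \<omega> + Y' m \<omega>) - (Z \<omega> + Z' \<omega>)\<bar>}
      \<le> measure M (?A m) + measure M (?A' m)" for m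
  proof -
    have "measure M {\<omega>\<in>space M. e < \<bar>(Y m \<omega> + Y' m \<omega>) - (Z \<omega> + Z' \<omega>)\<bar>}
        \<le> measure M (?A m \<union> ?A' m)"
    proof (rule finite_measure_mono)
      have "e/2 < \<bar>Y m \<omega> - Z \<omega>\<bar> \<or> e/2 < \<bar>Y' m \<omega> - Z' \<omega>\<bar>"
        if "e < \<bar>(Y m \<omega> + Y' m \<omega>) - (Z \<omega> + Z' \<omega>)\<bar>" for \<omega>
        using that by arith
      then show "{\<omega>\<in>space M. e < \<bar>(Y m \<omega> + Y' m \<omega>) - (Z \<omega> + Z' \<omega>)\<bar>} \<subseteq> ?A m \<union> ?A' m"
        by blast
      show "?A m \<union> ?A' m \<in> sets M"
        by measurable
    qed
    also have "\<dots> \<le> measure M (?A m) + measure M (?A' m)"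
      by (rule measure_Un_le) measurable
    finally show ?thesis .
  qed
  then show "(\<lambda>m. measure M {\<omega>\<in>space M. e < \<bar>(Y m \<omega> + Y' m \<omega>) - (Z \<omega> + Z' \<omega>)\<bar>}) \<longlonglongrightarrow> 0"
    by (intro tendsto_sandwich[OF always_eventually always_eventually tendsto_const lim_A]) simp_all
qed

lemma converges_in_prob_diff_left:
  assumes "converges_in_prob M Y Z" and "\<And>\<omega>. \<omega> \<in> space M \<Longrightarrow> g \<omega> - Z \<omega> = W \<omega>"
  shows "converges_in_prob M (\<lambda>m \<omega>. g \<omega> - Y m \<omega>) W"
proof -
  have "\<bar>(g \<omega> - Y m \<omega>) - W \<omega>\<bar> = \<bar>Y m \<omega> - Z \<omega>\<bar>" if "\<omega> \<in> space M" for \<omega> m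
    using assms(2)[OF that] by arith
  then have "{\<omega>\<in>space M. e < \<bar>(g \<omega> - Y m \<omega>) - W \<omega>\<bar>} = {\<omega>\<in>space M. e < \<bar>Y m \<omega> - Z \<omega>\<bar>}" for e m
    by auto
  then show ?thesis
    using assms(1) unfolding converges_in_prob_def by simp
qed

lemma converges_in_prob_cong:
  assumes "converges_in_prob M Y Z" and "\<And>m \<omega>. \<omega> \<in> space M \<Longrightarrow> Y' m \<omega> = Y m \<omega>"
  shows "converges_in_prob M Y' Z"
proof -
  have "{\<omega>\<in>space M. e < \<bar>Y' m \<omega> - Z \<omega>\<bar>} = {\<omega>\<in>space M. e < \<bar>Y m \<omega> - Z \<omega>\<bar>}" for e m
    using assms(2) by auto
  then show ?thesis
    using assms(1) unfolding converges_in_prob_def by simp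
qed

section \<open>Joint distribution functions\<close>

lemma joint_cdf_le_perturbed:
  fixes Z Y :: "nat \<Rightarrow> 'a \<Rightarrow> real"
  assumes "prob_space M" and [measurable]: "\<And>i. Z i \<in> borel_measurable M" "\<And>i. Y i \<in> borel_measurable M"
  shows "measure M {\<omega>\<in>space M. \<forall>i<n. Z i \<omega> \<le> c i}
    \<le> measure M {\<omega>\<in>space M. \<forall>i<n. Y i \<omega> \<le> c i + e}
      + (\<Sum>i<n. measure M {\<omega>\<in>space M. e < \<bar>Y i \<omega> - Z i \<omega>\<bar>})"
proof -
  interpret prob_space M by fact
  let ?U = "\<Union>i<n. {\<omega>\<in>space M. e < \<bar>Y i \<omega> - Z i \<omega>\<bar>}"
  have "measure M {\<omega>\<in>space M. \<forall>i<n. Z i \<omega> \<le> c i}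
      \<le> measure M ({\<omega>\<in>space M. \<forall>i<n. Y i \<omega> \<le> c i + e} \<union> ?U)"
  proof (rule finite_measure_mono)
    show "{\<omega>\<in>space M. \<forall>i<n. Z i \<omega> \<le> c i} \<subseteq> {\<omega>\<in>space M. \<forall>i<n. Y i \<omega> \<le> c i + e} \<union> ?U"
      by (auto simp: not_less abs_le_iff) (fastforce dest!: bspec)
    show "{\<omega>\<in>space M. \<forall>i<n. Y i \<omega> \<le> c i + e} \<union> ?U \<in> sets M"
      by measurable
  qed
  also have "\<dots> \<le> measure M {\<omega>\<in>space M. \<forall>i<n. Y i \<omega> \<le> c i + e} + measure M ?U"
    by (rule measure_Un_le) measurable
  also have "measure M ?U \<le> (\<Sum>i<n. measure M {\<omega>\<in>space M. e < \<bar>Y i \<omega> - Z i \<omega>\<bar>})"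
    by (rule finite_measure_subadditive_finite) auto
  finally show ?thesis
    by simp
qed

lemma joint_cdf_continuous_from_above:
  fixes Z :: "nat \<Rightarrow> 'a \<Rightarrow> real"
  assumes "prob_space M" and [measurable]: "\<And>i. Z i \<in> borel_measurable M"
  shows "(\<lambda>k. measure M {\<omega>\<in>space M. \<forall>i<n. Z i \<omega> \<le> c i + inverse (real (Suc k))})
    \<longlonglongrightarrow> measure M {\<omega>\<in>space M. \<forall>i<n. Z i \<omega> \<le> c i}"
proof -
  interpret prob_space M by fact
  define D where "D k = {\<omega>\<in>space M. \<forall>i<n. Z i \<omega> \<le> c i + inverse (real (Suc k))}" for k
  have "D k \<in> sets M" for k
    unfolding D_def by measurable
  then have D_sets: "range D \<subseteq> sets M"
    by blast
  have "decseq D"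
  proof (rule decseq_SucI)
    fix k
    have "inverse (real (Suc (Suc k))) \<le> inverse (real (Suc k))"
      by (simp add: le_imp_inverse_le)
    then show "D (Suc k) \<subseteq> D k"
      unfolding D_def by (auto intro: order_trans)
  qed
  moreover have "(\<Inter>k. D k) = {\<omega>\<in>space M. \<forall>i<n. Z i \<omega> \<le> c i}"
  proof (intro equalityI subsetI)
    fix \<omega> assume \<omega>: "\<omega> \<in> (\<Inter>k. D k)"
    have "Z i \<omega> \<le> c i" if "i < n" for i
    proof (rule LIMSEQ_le_const)
      show "(\<lambda>k. c i + inverse (real (Suc k))) \<longlonglongrightarrow> c i"
        using tendsto_add[OF tendsto_const LIMSEQ_inverse_real_of_nat, of "c i"] by simp
      show "\<exists>N. \<forall>k\<ge>N. Z i \<omega> \<le> c i + inverse (real (Suc k))"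
        using \<omega> that unfolding D_def by auto
    qed
    then show "\<omega> \<in> {\<omega>\<in>space M. \<forall>i<n. Z i \<omega> \<le> c i}"
      using \<omega> unfolding D_def by auto
  next
    fix \<omega> assume "\<omega> \<in> {\<omega>\<in>space M. \<forall>i<n. Z i \<omega> \<le> c i}"
    then show "\<omega> \<in> (\<Inter>k. D k)"
      unfolding D_def by (auto intro: order_trans[OF _ add_increasing2[OF _ order_refl]])
  qed
  ultimately show ?thesis
    using finite_Lim_measure_decseq[OF D_sets] unfolding D_def by simp
qed

lemma joint_cdf_le_if_converges_in_prob:
  fixes Z1 :: "nat \<Rightarrow> 'a \<Rightarrow> real" and Y1 :: "nat \<Rightarrow> nat \<Rightarrow> 'a \<Rightarrow> real"
    and Z2 :: "nat \<Rightarrow> 'b \<Rightarrow> real" and Y2 :: "nat \<Rightarrow> nat \<Rightarrow> 'b \<Rightarrow> real"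
  assumes P1: "prob_space M1" and P2: "prob_space M2"
    and [measurable]: "\<And>i. Z1 i \<in> borel_measurable M1" "\<And>m i. Y1 m i \<in> borel_measurable M1"
      "\<And>i. Z2 i \<in> borel_measurable M2" "\<And>m i. Y2 m i \<in> borel_measurable M2"
    and cdf_Y: "\<And>m c. measure M1 {\<omega>\<in>space M1. \<forall>i<n. Y1 m i \<omega> \<le> c i}
                      = measure M2 {\<omega>\<in>space M2. \<forall>i<n. Y2 m i \<omega> \<le> c i}"
    and Y1: "\<And>i. i < n \<Longrightarrow> converges_in_prob M1 (\<lambda>m. Y1 m i) (Z1 i)"
    and Y2: "\<And>i. i < n \<Longrightarrow> converges_in_prob M2 (\<lambda>m. Y2 m i) (Z2 i)"
  shows "measure M1 {\<omega>\<in>space M1. \<forall>i<n. Z1 i \<omega> \<le> c i}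
    \<le> measure M2 {\<omega>\<in>space M2. \<forall>i<n. Z2 i \<omega> \<le> c i}"
proof -
  define F2 where "F2 c' = measure M2 {\<omega>\<in>space M2. \<forall>i<n. Z2 i \<omega> \<le> c' i}" for c'
  have shifted: "measure M1 {\<omega>\<in>space M1. \<forall>i<n. Z1 i \<omega> \<le> c i} \<le> F2 (\<lambda>i. c i + 2 * e)"
    if "e > 0" for e
  proof -
    define err where "err m = (\<Sum>i<n. measure M1 {\<omega>\<in>space M1. e < \<bar>Y1 m i \<omega> - Z1 i \<omega>\<bar>})
       + (\<Sum>i<n. measure M2 {\<omega>\<in>space M2. e < \<bar>Z2 i \<omega> - Y2 m i \<omega>\<bar>})" for m
    have "err \<longlonglongrightarrow> (\<Sum>i<n. 0) + (\<Sum>i<n. 0)"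
      unfolding err_def using Y1 Y2 \<open>e > 0\<close>
      by (intro tendsto_add tendsto_sum) (auto simp: converges_in_prob_def abs_minus_commute)
    then have "(\<lambda>m. F2 (\<lambda>i. c i + 2 * e) + err m) \<longlonglongrightarrow> F2 (\<lambda>i. c i + 2 * e)"
      using tendsto_add[OF tendsto_const] by fastforce
    moreover have "measure M1 {\<omega>\<in>space M1. \<forall>i<n. Z1 i \<omega> \<le> c i} \<le> F2 (\<lambda>i. c i + 2 * e) + err m" for m
    proof -
      have "measure M1 {\<omega>\<in>space M1. \<forall>i<n. Z1 i \<omega> \<le> c i}
          \<le> measure M1 {\<omega>\<in>space M1. \<forall>i<n. Y1 m i \<omega> \<le> c i + e}
            + (\<Sum>i<n. measure M1 {\<omega>\<in>space M1. e < \<bar>Y1 m i \<omega> - Z1 i \<omega>\<bar>})"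
        by (rule joint_cdf_le_perturbed[OF P1]) measurable
      also have "measure M1 {\<omega>\<in>space M1. \<forall>i<n. Y1 m i \<omega> \<le> c i + e}
          = measure M2 {\<omega>\<in>space M2. \<forall>i<n. Y2 m i \<omega> \<le> c i + e}"
        by (rule cdf_Y)
      also have "\<dots> \<le> measure M2 {\<omega>\<in>space M2. \<forall>i<n. Z2 i \<omega> \<le> (c i + e) + e}
            + (\<Sum>i<n. measure M2 {\<omega>\<in>space M2. e < \<bar>Z2 i \<omega> - Y2 m i \<omega>\<bar>})"
        by (rule joint_cdf_le_perturbed[OF P2]) measurable
      finally show ?thesis
        unfolding F2_def err_def by (simp add: algebra_simps)
    qed
    ultimately show ?thesis
      by (intro LIMSEQ_le_const) auto
  qed
  have "measure M1 {\<omega>\<in>space M1. \<forall>i<n. Z1 i \<omega> \<le> c i} \<le> F2 (\<lambda>i. c i + inverse (real (Suc k)))" for k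
    using shifted[of "inverse (real (Suc k)) / 2"] by simp
  then show ?thesis
    using joint_cdf_continuous_from_above[OF P2, of Z2 n c] unfolding F2_def
    by (intro LIMSEQ_le_const) auto
qed

definition lower_orthant :: "nat \<Rightarrow> (nat \<Rightarrow> real) \<Rightarrow> (nat \<Rightarrow> real) set" where
  "lower_orthant n c = {v \<in> PiE {..<n} (\<lambda>_. UNIV). \<forall>i<n. v i \<le> c i}"

lemma lower_orthant_Int:
  "lower_orthant n c \<inter> lower_orthant n d = lower_orthant n (\<lambda>i. min (c i) (d i))"
  by (auto simp: lower_orthant_def)

lemma UN_lower_orthant: "(\<Union>k::nat. lower_orthant n (\<lambda>_. real k)) = PiE {..<n} (\<lambda>_. UNIV)"
proof (intro equalityI subsetI)
  fix v assume v: "v \<in> PiE {..<n} (\<lambda>_. UNIV :: real set)"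
  have "\<forall>i<n. v i \<le> real (nat \<lceil>\<Sum>j<n. \<bar>v j\<bar>\<rceil>)"
  proof (intro allI impI)
    fix i assume "i < n"
    then have "\<bar>v i\<bar> \<le> (\<Sum>j<n. \<bar>v j\<bar>)"
      by (intro member_le_sum) auto
    then show "v i \<le> real (nat \<lceil>\<Sum>j<n. \<bar>v j\<bar>\<rceil>)"
      by linarith
  qed
  then show "v \<in> (\<Union>k. lower_orthant n (\<lambda>_. real k))"
    using v unfolding lower_orthant_def by blast
qed (auto simp: lower_orthant_def)

lemma vimage_lower_orthant:
  "(\<lambda>\<omega>. \<lambda>i\<in>{..<n}. Z i \<omega>) -` lower_orthant n c \<inter> space M = {\<omega>\<in>space M. \<forall>i<n. Z i \<omega> \<le> c i}"
  by (auto simp: lower_orthant_def)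

lemma prod_generator_atMost_eq_lower_orthants:
  "{{f\<in>(\<Pi>\<^sub>E i\<in>{..<n}. UNIV). \<forall>i\<in>J. f i \<in> A i} | A J. J \<in> {{..<n}} \<and> A \<in> Pi J (\<lambda>_. range atMost)}
    = range (lower_orthant n)"
proof (intro equalityI subsetI)
  fix X :: "(nat \<Rightarrow> real) set" assume "X \<in> {{f\<in>(\<Pi>\<^sub>E i\<in>{..<n}. UNIV). \<forall>i\<in>J. f i \<in> A i} | A J. J \<in> {{..<n}} \<and> A \<in> Pi J (\<lambda>_. range atMost)}"
  then obtain A where X: "X = {f\<in>(\<Pi>\<^sub>E i\<in>{..<n}. UNIV). \<forall>i\<in>{..<n}. f i \<in> A i}"
    and A: "A \<in> Pi {..<n} (\<lambda>_. range atMost)"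
    by (auto simp only: mem_Collect_eq singleton_iff)
  define c where "c i = (SOME a. A i = {..a})" for i
  have "A i = {..c i}" if "i < n" for i
  proof -
    have "\<exists>a. A i = {..a}"
      using A that by auto
    then show ?thesis
      unfolding c_def by (rule someI_ex)
  qed
  then have "X = lower_orthant n c"
    unfolding X lower_orthant_def by auto
  then show "X \<in> range (lower_orthant n)"
    by blast
next
  fix X assume "X \<in> range (lower_orthant n)"
  then obtain c where "X = lower_orthant n c"
    by blast
  then have "X = {f\<in>(\<Pi>\<^sub>E i\<in>{..<n}. UNIV). \<forall>i\<in>{..<n}. f i \<in> {..c i}}"
    by (auto simp: lower_orthant_def)
  then show "X \<in> {{f\<in>(\<Pi>\<^sub>E i\<in>{..<n}. UNIV). \<forall>i\<in>J. f i \<in> A i} | A J. J \<in> {{..<n}} \<and> A \<in> Pi J (\<lambda>_. range atMost)}"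
    unfolding mem_Collect_eq by (intro exI[of _ "\<lambda>i. {..c i}"] exI[of _ "{..<n}"] conjI) simp_all
qed

lemma sets_PiM_borel_eq_lower_orthants:
  "sets (PiM {..<n} (\<lambda>_. borel :: real measure))
    = sigma_sets (PiE {..<n} (\<lambda>_. UNIV)) (range (lower_orthant n))"
proof -
  have "sets (PiM {..<n} (\<lambda>_. borel :: real measure))
      = sets (PiM {..<n} (\<lambda>_. sigma UNIV (range atMost) :: real measure))"
    by (rule sets_PiM_cong) (simp_all add: borel_eq_atMost[symmetric])
  also have "\<dots> = sets (sigma (\<Pi>\<^sub>E i\<in>{..<n}. UNIV)
      {{f\<in>(\<Pi>\<^sub>E i\<in>{..<n}. UNIV). \<forall>i\<in>J. f i \<in> A i} | A J. J \<in> {{..<n}} \<and> A \<in> Pi J (\<lambda>_. range atMost)})"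
  proof (rule sets_PiM_sigma)
    show "\<exists>S\<subseteq>range atMost. countable S \<and> UNIV = \<Union>(S :: real set set)"
      by (intro exI[of _ "range (\<lambda>k::nat. {..real k})"]) (auto intro: real_arch_simple)
  qed auto
  also have "\<dots> = sigma_sets (PiE {..<n} (\<lambda>_. UNIV)) (range (lower_orthant n))"
    unfolding prod_generator_atMost_eq_lower_orthants
    by (rule sets_measure_of) (auto simp: lower_orthant_def)
  finally show ?thesis .
qed

lemma lower_orthant_in_sets: "lower_orthant n c \<in> sets (PiM {..<n} (\<lambda>_. borel))"
  unfolding sets_PiM_borel_eq_lower_orthants by blast

lemma distr_eq_if_joint_cdf_eq:
  fixes Z1 :: "nat \<Rightarrow> 'a \<Rightarrow> real" and Z2 :: "nat \<Rightarrow> 'b \<Rightarrow> real"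
  assumes "prob_space M1" "prob_space M2"
    and [measurable]: "\<And>i. Z1 i \<in> borel_measurable M1" "\<And>i. Z2 i \<in> borel_measurable M2"
    and cdf: "\<And>c. measure M1 {\<omega>\<in>space M1. \<forall>i<n. Z1 i \<omega> \<le> c i}
                 = measure M2 {\<omega>\<in>space M2. \<forall>i<n. Z2 i \<omega> \<le> c i}"
  shows "distr M1 (PiM {..<n} (\<lambda>_. borel)) (\<lambda>\<omega>. \<lambda>i\<in>{..<n}. Z1 i \<omega>)
       = distr M2 (PiM {..<n} (\<lambda>_. borel)) (\<lambda>\<omega>. \<lambda>i\<in>{..<n}. Z2 i \<omega>)"
    (is "?D1 = ?D2")
proof -
  interpret M1: prob_space M1 by fact
  interpret M2: prob_space M2 by fact
  interpret D1: prob_space ?D1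
    by (intro M1.prob_space_distr measurable_restrict) simp
  have Z1_vec: "(\<lambda>\<omega>. \<lambda>i\<in>{..<n}. Z1 i \<omega>) \<in> measurable M1 (PiM {..<n} (\<lambda>_. borel))"
    and Z2_vec: "(\<lambda>\<omega>. \<lambda>i\<in>{..<n}. Z2 i \<omega>) \<in> measurable M2 (PiM {..<n} (\<lambda>_. borel))"
    by (simp_all add: measurable_restrict)
  note sets_eq = sets_PiM_borel_eq_lower_orthants[of n]
  show ?thesis
  proof (rule measure_eqI_generator_eq[where A="\<lambda>k. lower_orthant n (\<lambda>_. real k)"])
    show "Int_stable (range (lower_orthant n))"
      by (auto simp: Int_stable_def lower_orthant_Int)
    show "range (lower_orthant n) \<subseteq> Pow (PiE {..<n} (\<lambda>_. UNIV))"
      by (auto simp: lower_orthant_def)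
    show "sets ?D1 = sigma_sets (PiE {..<n} (\<lambda>_. UNIV)) (range (lower_orthant n))"
      "sets ?D2 = sigma_sets (PiE {..<n} (\<lambda>_. UNIV)) (range (lower_orthant n))"
      by (simp_all add: sets_eq)
    show "range (\<lambda>k. lower_orthant n (\<lambda>_. real k)) \<subseteq> range (lower_orthant n)"
      by blast
    show "(\<Union>k. lower_orthant n (\<lambda>_. real k)) = PiE {..<n} (\<lambda>_. UNIV)"
      by (rule UN_lower_orthant)
    show "emeasure ?D1 (lower_orthant n (\<lambda>_. real k)) \<noteq> \<infinity>" for k
      using D1.emeasure_finite by simp
    fix X assume "X \<in> range (lower_orthant n)"
    then obtain c where X: "X = lower_orthant n c"
      by blast
    show "emeasure ?D1 X = emeasure ?D2 X"
      using cdf[of c] unfolding X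
      by (simp add: emeasure_distr[OF Z1_vec] emeasure_distr[OF Z2_vec] lower_orthant_in_sets
          vimage_lower_orthant M1.emeasure_eq_measure M2.emeasure_eq_measure)
  qed
qed

lemma joint_cdf_eq_if_distr_eq:
  fixes Z1 :: "nat \<Rightarrow> 'a \<Rightarrow> real" and Z2 :: "nat \<Rightarrow> 'b \<Rightarrow> real"
  assumes [measurable]: "\<And>i. Z1 i \<in> borel_measurable M1" "\<And>i. Z2 i \<in> borel_measurable M2"
    and distr_eq: "distr M1 (PiM {..<n} (\<lambda>_. borel)) (\<lambda>\<omega>. \<lambda>i\<in>{..<n}. Z1 i \<omega>)
                 = distr M2 (PiM {..<n} (\<lambda>_. borel)) (\<lambda>\<omega>. \<lambda>i\<in>{..<n}. Z2 i \<omega>)"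
  shows "measure M1 {\<omega>\<in>space M1. \<forall>i<n. Z1 i \<omega> \<le> c i}
       = measure M2 {\<omega>\<in>space M2. \<forall>i<n. Z2 i \<omega> \<le> c i}"
proof -
  have "measure M1 {\<omega>\<in>space M1. \<forall>i<n. Z1 i \<omega> \<le> c i}
      = measure (distr M1 (PiM {..<n} (\<lambda>_. borel)) (\<lambda>\<omega>. \<lambda>i\<in>{..<n}. Z1 i \<omega>)) (lower_orthant n c)"
    by (simp add: measure_distr measurable_restrict lower_orthant_in_sets vimage_lower_orthant)
  also have "\<dots> = measure M2 {\<omega>\<in>space M2. \<forall>i<n. Z2 i \<omega> \<le> c i}"
    unfolding distr_eq
    by (simp add: measure_distr measurable_restrict lower_orthant_in_sets vimage_lower_orthant)
  finally show ?thesis .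
qed

lemma distr_eq_if_converges_in_prob:
  fixes Z1 :: "nat \<Rightarrow> 'a \<Rightarrow> real" and Y1 :: "nat \<Rightarrow> nat \<Rightarrow> 'a \<Rightarrow> real"
    and Z2 :: "nat \<Rightarrow> 'b \<Rightarrow> real" and Y2 :: "nat \<Rightarrow> nat \<Rightarrow> 'b \<Rightarrow> real"
  assumes P1: "prob_space M1" and P2: "prob_space M2"
    and [measurable]: "\<And>i. Z1 i \<in> borel_measurable M1" "\<And>m i. Y1 m i \<in> borel_measurable M1"
      "\<And>i. Z2 i \<in> borel_measurable M2" "\<And>m i. Y2 m i \<in> borel_measurable M2"
    and distr_Y: "\<And>m. distr M1 (PiM {..<n} (\<lambda>_. borel)) (\<lambda>\<omega>. \<lambda>i\<in>{..<n}. Y1 m i \<omega>)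
                      = distr M2 (PiM {..<n} (\<lambda>_. borel)) (\<lambda>\<omega>. \<lambda>i\<in>{..<n}. Y2 m i \<omega>)"
    and Y1: "\<And>i. i < n \<Longrightarrow> converges_in_prob M1 (\<lambda>m. Y1 m i) (Z1 i)"
    and Y2: "\<And>i. i < n \<Longrightarrow> converges_in_prob M2 (\<lambda>m. Y2 m i) (Z2 i)"
  shows "distr M1 (PiM {..<n} (\<lambda>_. borel)) (\<lambda>\<omega>. \<lambda>i\<in>{..<n}. Z1 i \<omega>)
       = distr M2 (PiM {..<n} (\<lambda>_. borel)) (\<lambda>\<omega>. \<lambda>i\<in>{..<n}. Z2 i \<omega>)"
proof (rule distr_eq_if_joint_cdf_eq[OF P1 P2])
  have cdf_Y: "measure M1 {\<omega>\<in>space M1. \<forall>i<n. Y1 m i \<omega> \<le> c i}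
      = measure M2 {\<omega>\<in>space M2. \<forall>i<n. Y2 m i \<omega> \<le> c i}" for m c
    by (rule joint_cdf_eq_if_distr_eq[OF _ _ distr_Y]) measurable
  show "measure M1 {\<omega>\<in>space M1. \<forall>i<n. Z1 i \<omega> \<le> c i}
      = measure M2 {\<omega>\<in>space M2. \<forall>i<n. Z2 i \<omega> \<le> c i}" for c
  proof (rule antisym)
    show "measure M1 {\<omega>\<in>space M1. \<forall>i<n. Z1 i \<omega> \<le> c i}
        \<le> measure M2 {\<omega>\<in>space M2. \<forall>i<n. Z2 i \<omega> \<le> c i}"
      by (rule joint_cdf_le_if_converges_in_prob[OF P1 P2 _ _ _ _ cdf_Y Y1 Y2]) measurable
    show "measure M2 {\<omega>\<in>space M2. \<forall>i<n. Z2 i \<omega> \<le> c i}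
        \<le> measure M1 {\<omega>\<in>space M1. \<forall>i<n. Z1 i \<omega> \<le> c i}"
      by (rule joint_cdf_le_if_converges_in_prob[OF P2 P1 _ _ _ _ cdf_Y[symmetric] Y2 Y1]) measurable
  qed
qed measurable

section \<open>Averaging out the noise\<close>

lemma noisy_process_noise_distr:
  assumes np: "noisy_process M f fs fn s"
  shows "distr M borel (fn y) = density lborel (normal_density 0 (sqrt s))"
proof -
  note np_facts = noisy_processD[OF np]
  have [measurable]: "fn x \<in> borel_measurable M" for x
    by (rule np_facts(4))
  let ?N = "density lborel (normal_density 0 (sqrt s))"
  have "distr M borel (fn y) = distr (fin_distr M fn 1 (\<lambda>_. y)) borel (\<lambda>v. v 0)"
    unfolding fin_distr_def
    by (subst distr_distr) (auto intro!: distr_cong measurable_restrict simp: comp_def)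
  also have "\<dots> = distr (PiM {..<1::nat} (\<lambda>_. ?N)) ?N (\<lambda>v. v 0)"
  proof -
    have "inj_on (\<lambda>_::nat. y) {..<1}"
      by (simp add: inj_on_def)
    then have "fin_distr M fn 1 (\<lambda>_. y) = PiM {..<1} (\<lambda>_. ?N)"
      by (rule np_facts(7))
    then show ?thesis
      by (rule distr_cong) simp_all
  qed
  also have "\<dots> = ?N"
    by (rule distr_PiM_component) (auto intro!: prob_space_normal_density simp: np_facts(2))
  finally show ?thesis .
qed

lemma noisy_process_noise_sum_distributed:
  assumes np: "noisy_process M f fs fn s" and inj: "inj_on y {..<N}" and "N > 0"
  shows "distributed M lborel (\<lambda>\<omega>. \<Sum>k<N. fn (y k) \<omega>) (normal_density 0 (sqrt (real N * s)))"
proof -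
  note np_facts = noisy_processD[OF np]
  interpret prob_space M
    by (rule np_facts(1))
  have [measurable]: "fn x \<in> borel_measurable M" for x
    by (rule np_facts(4))
  have indep: "indep_vars (\<lambda>_. borel) (\<lambda>k. fn (y k)) {..<N}"
  proof (subst indep_vars_iff_distr_eq_PiM')
    show "distr M (Pi\<^sub>M {..<N} (\<lambda>_. borel)) (\<lambda>\<omega>. \<lambda>k\<in>{..<N}. fn (y k) \<omega>) =
      Pi\<^sub>M {..<N} (\<lambda>k. distr M borel (fn (y k)))"
      using np_facts(7)[OF inj] by (simp add: noisy_process_noise_distr[OF np] fin_distr_def)
  qed (use \<open>N > 0\<close> in auto)
  have "distributed M lborel (fn (y k)) (normal_density 0 (sqrt s))" for k
  proof -
    have "distr M lborel (fn (y k)) = distr M borel (fn (y k))"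
      by (rule distr_cong) simp_all
    then show ?thesis
      unfolding distributed_def using noisy_process_noise_distr[OF np, of "y k"] by simp
  qed
  then have "distributed M lborel (\<lambda>\<omega>. \<Sum>k\<in>{..<N}. fn (y k) \<omega>)
      (normal_density (\<Sum>k\<in>{..<N}. 0) (sqrt (\<Sum>k\<in>{..<N}. (sqrt s)\<^sup>2)))"
    by (intro sum_indep_normal[OF _ _ indep]) (use \<open>N > 0\<close> np_facts(2) in auto)
  then show ?thesis
    using np_facts(2) by simp
qed

lemma noisy_process_noise_average_tail:
  assumes np: "noisy_process M f fs fn s" and inj: "inj_on y {..<N}" and "N > 0" and "e > 0"
  shows "measure M {\<omega>\<in>space M. e \<le> \<bar>(\<Sum>k<N. fn (y k) \<omega>) / real N\<bar>} \<le> s / (real N * e\<^sup>2)"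
proof -
  note np_facts = noisy_processD[OF np]
  interpret prob_space M
    by (rule np_facts(1))
  have [measurable]: "fn x \<in> borel_measurable M" for x
    by (rule np_facts(4))
  define S where "S \<omega> = (\<Sum>k<N. fn (y k) \<omega>)" for \<omega>
  have S_meas[measurable]: "S \<in> borel_measurable M"
    unfolding S_def by measurable
  have S_distr: "distributed M lborel S (normal_density 0 (sqrt (real N * s)))"
    unfolding S_def using noisy_process_noise_sum_distributed[OF np inj \<open>N > 0\<close>] by simp
  have sd_pos: "0 < sqrt (real N * s)"
    using np_facts(2) \<open>N > 0\<close> by simp
  have "integrable lborel (\<lambda>x. normal_density 0 (sqrt (real N * s)) x * x ^ 2)"
    using integrable_normal_moment[OF sd_pos, where \<mu>=0 and k=2] by simp
  then have S_square: "integrable M (\<lambda>\<omega>. S \<omega> ^ 2)"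
    using distributed_integrable[OF S_distr, of "\<lambda>x. x ^ 2"] by simp
  have "prob {\<omega>\<in>space M. real N * e \<le> \<bar>S \<omega> - expectation S\<bar>} \<le> variance S / (real N * e)\<^sup>2"
    by (rule Chebyshev_inequality[OF S_meas S_square]) (use \<open>N > 0\<close> \<open>e > 0\<close> in simp)
  moreover have "expectation S = 0" and "variance S = real N * s"
    using normal_distributed_expectation[OF sd_pos S_distr]
      normal_distributed_variance[OF sd_pos S_distr] np_facts(2) by simp_all
  moreover have "(e \<le> \<bar>t / real N\<bar>) = (real N * e \<le> \<bar>t\<bar>)" for t :: real
    using \<open>N > 0\<close> by (simp add: abs_divide pos_le_divide_eq mult.commute)
  moreover have "real N * s / (real N * e)\<^sup>2 = s / (real N * e\<^sup>2)"
    using \<open>N > 0\<close> \<open>e > 0\<close> by (simp add: power2_eq_square)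
  ultimately show ?thesis
    unfolding S_def by simp
qed

lemma noisy_process_noise_average_converges:
  assumes np: "noisy_process M f fs fn s" and inj: "\<And>m. inj_on (y m) {..<Suc m}"
  shows "converges_in_prob M (\<lambda>m \<omega>. (\<Sum>k<Suc m. fn (y m k) \<omega>) / real (Suc m)) (\<lambda>_. 0)"
  unfolding converges_in_prob_def
proof (intro allI impI)
  fix e :: real assume "e > 0"
  have bound: "measure M {\<omega>\<in>space M. e < \<bar>(\<Sum>k<Suc m. fn (y m k) \<omega>) / real (Suc m) - 0\<bar>}
      \<le> s / (real (Suc m) * e\<^sup>2)" for m
  proof -
    interpret prob_space M
      by (rule noisy_processD(1)[OF np])
    have [measurable]: "fn x \<in> borel_measurable M" for x
      by (rule noisy_processD(4)[OF np])
    have "measure M {\<omega>\<in>space M. e < \<bar>(\<Sum>k<Suc m. fn (y m k) \<omega>) / real (Suc m) - 0\<bar>}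
        \<le> measure M {\<omega>\<in>space M. e \<le> \<bar>(\<Sum>k<Suc m. fn (y m k) \<omega>) / real (Suc m)\<bar>}"
      by (intro finite_measure_mono) auto
    also have "\<dots> \<le> s / (real (Suc m) * e\<^sup>2)"
      by (rule noisy_process_noise_average_tail[OF np inj _ \<open>e > 0\<close>]) simp
    finally show ?thesis .
  qed
  have "(\<lambda>m. s / e\<^sup>2 * inverse (real (Suc m))) \<longlonglongrightarrow> s / e\<^sup>2 * 0"
    by (intro tendsto_mult tendsto_const LIMSEQ_inverse_real_of_nat)
  then have lim: "(\<lambda>m. s / (real (Suc m) * e\<^sup>2)) \<longlonglongrightarrow> 0"
    by (simp add: field_simps)
  show "(\<lambda>m. measure M {\<omega>\<in>space M. e < \<bar>(\<Sum>k<Suc m. fn (y m k) \<omega>) / real (Suc m) - 0\<bar>}) \<longlonglongrightarrow> 0"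
    by (rule tendsto_sandwich[OF always_eventually always_eventually tendsto_const lim]) (simp, intro allI bound)
qed

lemma grid_average_tendsto:
  fixes g :: "real \<Rightarrow> real"
  assumes "isCont g x0" and h: "(\<lambda>m. real m * h m) \<longlonglongrightarrow> 0"
  shows "(\<lambda>m. (\<Sum>k<Suc m. g (x0 + real k * h m)) / real (Suc m)) \<longlonglongrightarrow> g x0"
proof (rule LIMSEQ_I)
  fix r :: real assume "r > 0"
  then obtain d where "d > 0" and d: "\<And>x. \<bar>x - x0\<bar> < d \<Longrightarrow> \<bar>g x - g x0\<bar> < r / 2"
    using \<open>isCont g x0\<close> unfolding continuous_at_eps_delta dist_real_def
    by (meson half_gt_zero)
  obtain M where M: "\<And>m. m \<ge> M \<Longrightarrow> \<bar>real m * h m\<bar> < d"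
    using LIMSEQ_D[OF h \<open>d > 0\<close>] by auto
  show "\<exists>M. \<forall>m\<ge>M. norm ((\<Sum>k<Suc m. g (x0 + real k * h m)) / real (Suc m) - g x0) < r"
  proof (intro exI allI impI)
    fix m assume "m \<ge> M"
    have close: "\<bar>g (x0 + real k * h m) - g x0\<bar> \<le> r / 2" if "k < Suc m" for k
    proof -
      have "\<bar>real k * h m\<bar> \<le> \<bar>real m * h m\<bar>"
        using that by (simp add: abs_mult mult_right_mono)
      then show ?thesis
        using d[of "x0 + real k * h m"] M[OF \<open>m \<ge> M\<close>] by simp
    qed
    have "\<bar>(\<Sum>k<Suc m. g (x0 + real k * h m)) / real (Suc m) - g x0\<bar>
        = \<bar>\<Sum>k<Suc m. g (x0 + real k * h m) - g x0\<bar> / real (Suc m)"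
      by (simp add: sum_subtractf abs_divide field_simps del: sum.lessThan_Suc of_nat_Suc)
    also have "\<dots> \<le> (\<Sum>k<Suc m. \<bar>g (x0 + real k * h m) - g x0\<bar>) / real (Suc m)"
      by (intro divide_right_mono sum_abs) simp
    also have "\<dots> \<le> (\<Sum>k<Suc m. r / 2) / real (Suc m)"
      by (intro divide_right_mono sum_mono close) simp_all
    also have "\<dots> < r"
      using \<open>r > 0\<close> by (simp del: sum.lessThan_Suc of_nat_Suc)
    finally show "norm ((\<Sum>k<Suc m. g (x0 + real k * h m)) / real (Suc m) - g x0) < r"
      by simp
  qed
qed

lemma noisy_process_grid_average_converges:
  assumes np: "noisy_process M f fs fn s"
    and h_pos: "\<And>m. h m > 0" and h: "(\<lambda>m. real m * h m) \<longlonglongrightarrow> 0"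
  shows "converges_in_prob M (\<lambda>m \<omega>. (\<Sum>k<Suc m. f (x0 + real k * h m) \<omega>) / real (Suc m)) (fs x0)"
proof -
  note np_facts = noisy_processD[OF np]
  have [measurable]: "fs x \<in> borel_measurable M" "fn x \<in> borel_measurable M" for x
    by (simp_all add: np_facts(3,4))
  have smooth: "converges_in_prob M (\<lambda>m \<omega>. (\<Sum>k<Suc m. fs (x0 + real k * h m) \<omega>) / real (Suc m)) (fs x0)"
  proof (rule converges_in_prob_if_pointwise[OF np_facts(1)])
    fix \<omega> assume "\<omega> \<in> space M"
    then have "isCont (\<lambda>x. fs x \<omega>) x0"
      using np_facts(6) continuous_on_eq_continuous_at by blast
    then show "(\<lambda>m. (\<Sum>k<Suc m. fs (x0 + real k * h m) \<omega>) / real (Suc m)) \<longlonglongrightarrow> fs x0 \<omega>"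
      by (rule grid_average_tendsto[OF _ h])
  qed measurable
  have "inj_on (\<lambda>k. x0 + real k * h m) {..<Suc m}" for m
    using h_pos[of m] by (simp add: inj_on_def)
  then have noise: "converges_in_prob M (\<lambda>m \<omega>. (\<Sum>k<Suc m. fn (x0 + real k * h m) \<omega>) / real (Suc m)) (\<lambda>_. 0)"
    by (rule noisy_process_noise_average_converges[OF np])
  have "converges_in_prob M
      (\<lambda>m \<omega>. (\<Sum>k<Suc m. fs (x0 + real k * h m) \<omega>) / real (Suc m)
        + (\<Sum>k<Suc m. fn (x0 + real k * h m) \<omega>) / real (Suc m)) (\<lambda>\<omega>. fs x0 \<omega> + 0)"
    by (rule converges_in_prob_add[OF np_facts(1) _ _ _ _ smooth noise]) measurable
  then have "converges_in_prob M
      (\<lambda>m \<omega>. (\<Sum>k<Suc m. fs (x0 + real k * h m) \<omega>) / real (Suc m)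
        + (\<Sum>k<Suc m. fn (x0 + real k * h m) \<omega>) / real (Suc m)) (fs x0)"
    by simp
  then show ?thesis
    by (rule converges_in_prob_cong)
      (simp add: np_facts(5) sum.distrib add_divide_distrib del: sum.lessThan_Suc)
qed

section \<open>Refining grids of inputs\<close>

lemma inj_on_separated:
  fixes x :: "nat \<Rightarrow> real"
  assumes "inj_on x {..<n}"
  obtains d where "d > 0" and "\<And>i j. i < n \<Longrightarrow> j < n \<Longrightarrow> i \<noteq> j \<Longrightarrow> d \<le> \<bar>x i - x j\<bar>"
proof -
  define D where "D = insert 1 {\<bar>x i - x j\<bar> | i j. i < n \<and> j < n \<and> i \<noteq> j}"
  have "D = insert 1 ((\<lambda>(i, j). \<bar>x i - x j\<bar>) ` {(i, j). i < n \<and> j < n \<and> i \<noteq> j})"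
    unfolding D_def by auto
  moreover have "finite {(i, j). i < n \<and> j < n \<and> i \<noteq> j}"
    by (rule finite_subset[of _ "{..<n} \<times> {..<n}"]) auto
  ultimately have "finite D"
    by simp
  moreover have "\<forall>a\<in>D. a > 0"
    using assms unfolding D_def inj_on_def by auto
  ultimately have "Min D > 0"
    by (simp add: D_def)
  moreover have "Min D \<le> \<bar>x i - x j\<bar>" if "i < n" "j < n" "i \<noteq> j" for i j
    using \<open>finite D\<close> that by (intro Min_le) (auto simp: D_def)
  ultimately show ?thesis
    by (rule that)
qed

definition grid :: "(nat \<Rightarrow> real) \<Rightarrow> nat \<Rightarrow> real \<Rightarrow> nat \<Rightarrow> real" where
  "grid x K h j = x (j div K) + real (j mod K) * h"

lemma grid_block: "k < K \<Longrightarrow> grid x K h (i * K + k) = x i + real k * h"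
  by (simp add: grid_def)

lemma block_index_less: "i < n \<Longrightarrow> k < K \<Longrightarrow> i * K + k < n * (K::nat)"
proof -
  assume "i < n" "k < K"
  then have "i * K + k < Suc i * K"
    by simp
  also have "\<dots> \<le> n * K"
    using \<open>i < n\<close> by (intro mult_right_mono) auto
  finally show ?thesis .
qed

lemma grid_blocks:
  "(\<lambda>i\<in>{..<n}. \<phi> (\<lambda>k\<in>{..<K}. (\<lambda>j\<in>{..<n * K}. f (grid x K h j) \<omega>) (i * K + k)))
    = (\<lambda>i\<in>{..<n}. \<phi> (\<lambda>k\<in>{..<K}. f (x i + real k * h) \<omega>))"
  by (intro restrict_ext arg_cong[where f=\<phi>]) (simp add: block_index_less grid_block)

lemma inj_on_grid:
  fixes x :: "nat \<Rightarrow> real"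
  assumes sep: "\<And>i j. i < n \<Longrightarrow> j < n \<Longrightarrow> i \<noteq> j \<Longrightarrow> d \<le> \<bar>x i - x j\<bar>"
    and "h > 0" and "real K * h \<le> d"
  shows "inj_on (grid x K h) {..<n * K}"
proof (rule inj_onI)
  fix j j' assume j: "j \<in> {..<n * K}" and j': "j' \<in> {..<n * K}" and eq: "grid x K h j = grid x K h j'"
  then have "K > 0"
    by (cases K) auto
  let ?i = "j div K" and ?k = "j mod K" and ?i' = "j' div K" and ?k' = "j' mod K"
  have "?i < n" "?i' < n"
    using j j' by (simp_all add: less_mult_imp_div_less)
  have "?k < K" "?k' < K"
    using \<open>K > 0\<close> by simp_all
  have same_block: "?i = ?i'"
  proof (rule ccontr)
    assume "?i \<noteq> ?i'"
    have "x ?i - x ?i' = (real ?k' - real ?k) * h"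
      using eq by (simp add: grid_def algebra_simps)
    then have "\<bar>x ?i - x ?i'\<bar> = \<bar>real ?k' - real ?k\<bar> * h"
      using \<open>h > 0\<close> by (simp add: abs_mult)
    also have "\<dots> < real K * h"
    proof (rule mult_strict_right_mono)
      show "\<bar>real ?k' - real ?k\<bar> < real K"
        using \<open>?k < K\<close> \<open>?k' < K\<close> by arith
    qed (rule \<open>h > 0\<close>)
    finally show False
      using sep[OF \<open>?i < n\<close> \<open>?i' < n\<close> \<open>?i \<noteq> ?i'\<close>] \<open>real K * h \<le> d\<close> by simp
  qed
  then have "?k = ?k'"
    using eq \<open>h > 0\<close> by (simp add: grid_def)
  with same_block show "j = j'"
    by (metis div_mult_mod_eq)
qed

lemma distr_eq_if_fin_distr_eq:
  assumes fin_eq: "fin_distr M1 f1 N p = fin_distr M2 f2 N p"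
    and [measurable]: "\<And>x. f1 x \<in> borel_measurable M1" "\<And>x. f2 x \<in> borel_measurable M2"
    and g[measurable]: "g \<in> measurable (PiM {..<N} (\<lambda>_. borel)) T"
  shows "distr M1 T (\<lambda>\<omega>. g (\<lambda>j\<in>{..<N}. f1 (p j) \<omega>)) = distr M2 T (\<lambda>\<omega>. g (\<lambda>j\<in>{..<N}. f2 (p j) \<omega>))"
proof -
  have "distr M1 T (\<lambda>\<omega>. g (\<lambda>j\<in>{..<N}. f1 (p j) \<omega>)) = distr (fin_distr M1 f1 N p) T g"
    unfolding fin_distr_def by (subst distr_distr) (simp_all add: comp_def measurable_restrict)
  moreover have "distr M2 T (\<lambda>\<omega>. g (\<lambda>j\<in>{..<N}. f2 (p j) \<omega>)) = distr (fin_distr M2 f2 N p) T g"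
    unfolding fin_distr_def by (subst distr_distr) (simp_all add: comp_def measurable_restrict)
  ultimately show ?thesis
    by (simp add: fin_eq)
qed

lemma distr_block_functional_eq:
  assumes fin_eq: "\<forall>n x. inj_on x {..<n} \<longrightarrow> fin_distr M1 f1 n x = fin_distr M2 f2 n x"
    and [measurable]: "\<And>x. f1 x \<in> borel_measurable M1" "\<And>x. f2 x \<in> borel_measurable M2"
    and inj: "inj_on (grid x K h) {..<n * K}"
    and \<phi>[measurable]: "\<phi> \<in> borel_measurable (PiM {..<K} (\<lambda>_. borel))"
  shows "distr M1 (PiM {..<n} (\<lambda>_. borel)) (\<lambda>\<omega>. \<lambda>i\<in>{..<n}. \<phi> (\<lambda>k\<in>{..<K}. f1 (x i + real k * h) \<omega>))
       = distr M2 (PiM {..<n} (\<lambda>_. borel)) (\<lambda>\<omega>. \<lambda>i\<in>{..<n}. \<phi> (\<lambda>k\<in>{..<K}. f2 (x i + real k * h) \<omega>))"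
proof -
  define G where "G v = (\<lambda>i\<in>{..<n}. \<phi> (\<lambda>k\<in>{..<K}. v (i * K + k)))" for v :: "nat \<Rightarrow> real"
  have "G \<in> measurable (PiM {..<n * K} (\<lambda>_. borel)) (PiM {..<n} (\<lambda>_. borel))"
    unfolding G_def
    by (intro measurable_restrict measurable_compose[OF _ \<phi>]) (simp add: block_index_less)
  then have "distr M1 (PiM {..<n} (\<lambda>_. borel)) (\<lambda>\<omega>. G (\<lambda>j\<in>{..<n * K}. f1 (grid x K h j) \<omega>))
      = distr M2 (PiM {..<n} (\<lambda>_. borel)) (\<lambda>\<omega>. G (\<lambda>j\<in>{..<n * K}. f2 (grid x K h j) \<omega>))"
    using fin_eq inj by (intro distr_eq_if_fin_distr_eq) simp_all
  then show ?thesis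
    unfolding G_def grid_blocks .
qed

lemma refining_grids_exist:
  fixes x :: "nat \<Rightarrow> real"
  assumes "inj_on x {..<n}"
  obtains h :: "nat \<Rightarrow> real" where "\<And>m. h m > 0" and "(\<lambda>m. real m * h m) \<longlonglongrightarrow> 0"
    and "\<And>m. inj_on (grid x (Suc m) (h m)) {..<n * Suc m}"
proof -
  obtain d where "d > 0" and sep: "\<And>i j. i < n \<Longrightarrow> j < n \<Longrightarrow> i \<noteq> j \<Longrightarrow> d \<le> \<bar>x i - x j\<bar>"
    using inj_on_separated[OF assms] by blast
  define h where "h m = d / (real (Suc m) * real (Suc m))" for m
  have h_pos: "h m > 0" for m
    using \<open>d > 0\<close> by (simp add: h_def)
  have step: "real (Suc m) * h m = d * inverse (real (Suc m))" for m
    by (simp add: h_def field_simps del: of_nat_Suc)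
  have bound_lim: "(\<lambda>m. d * inverse (real (Suc m))) \<longlonglongrightarrow> 0"
    using tendsto_mult_right_zero[OF LIMSEQ_inverse_real_of_nat] .
  have "0 \<le> real m * h m" "real m * h m \<le> d * inverse (real (Suc m))" for m
    using h_pos[of m] step[of m] by (simp_all add: distrib_right)
  then have h_lim: "(\<lambda>m. real m * h m) \<longlonglongrightarrow> 0"
    by (intro tendsto_sandwich[OF always_eventually always_eventually tendsto_const bound_lim]) auto
  have grid_inj: "inj_on (grid x (Suc m) (h m)) {..<n * Suc m}" for m
  proof (rule inj_on_grid[OF sep h_pos])
    show "real (Suc m) * h m \<le> d"
      unfolding step using \<open>d > 0\<close> by (simp add: field_simps)
  qed
  show ?thesis
    by (rule that[OF h_pos h_lim grid_inj])
qed

lemma grid_statistics_distr_eq: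
  assumes fin_eq: "\<forall>n x. inj_on x {..<n} \<longrightarrow> fin_distr M1 f1 n x = fin_distr M2 f2 n x"
    and [measurable]: "\<And>x. f1 x \<in> borel_measurable M1" "\<And>x. f2 x \<in> borel_measurable M2"
    and inj: "inj_on (grid x K h) {..<n * K}" and "K > 0"
  shows "distr M1 (PiM {..<n} (\<lambda>_. borel)) (\<lambda>\<omega>. \<lambda>i\<in>{..<n}. (\<Sum>k<K. f1 (x i + real k * h) \<omega>) / real K)
       = distr M2 (PiM {..<n} (\<lambda>_. borel)) (\<lambda>\<omega>. \<lambda>i\<in>{..<n}. (\<Sum>k<K. f2 (x i + real k * h) \<omega>) / real K)"
    and "distr M1 (PiM {..<n} (\<lambda>_. borel))
         (\<lambda>\<omega>. \<lambda>i\<in>{..<n}. f1 (x i) \<omega> - (\<Sum>k<K. f1 (x i + real k * h) \<omega>) / real K)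
       = distr M2 (PiM {..<n} (\<lambda>_. borel))
         (\<lambda>\<omega>. \<lambda>i\<in>{..<n}. f2 (x i) \<omega> - (\<Sum>k<K. f2 (x i + real k * h) \<omega>) / real K)"
proof -
  have [measurable]: "(\<lambda>v. v k) \<in> borel_measurable (PiM {..<K} (\<lambda>_. borel))" if "k < K" for k
    using that by simp
  have "(\<lambda>v. (\<Sum>k<K. v k) / real K) \<in> borel_measurable (PiM {..<K} (\<lambda>_. borel))"
    by measurable
  from distr_block_functional_eq[OF fin_eq _ _ inj this]
  show "distr M1 (PiM {..<n} (\<lambda>_. borel)) (\<lambda>\<omega>. \<lambda>i\<in>{..<n}. (\<Sum>k<K. f1 (x i + real k * h) \<omega>) / real K)
      = distr M2 (PiM {..<n} (\<lambda>_. borel)) (\<lambda>\<omega>. \<lambda>i\<in>{..<n}. (\<Sum>k<K. f2 (x i + real k * h) \<omega>) / real K)"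
    by simp
  have "(\<lambda>v. v 0 - (\<Sum>k<K. v k) / real K) \<in> borel_measurable (PiM {..<K} (\<lambda>_. borel))"
    using \<open>K > 0\<close> by measurable
  from distr_block_functional_eq[OF fin_eq _ _ inj this]
  show "distr M1 (PiM {..<n} (\<lambda>_. borel))
         (\<lambda>\<omega>. \<lambda>i\<in>{..<n}. f1 (x i) \<omega> - (\<Sum>k<K. f1 (x i + real k * h) \<omega>) / real K)
      = distr M2 (PiM {..<n} (\<lambda>_. borel))
         (\<lambda>\<omega>. \<lambda>i\<in>{..<n}. f2 (x i) \<omega> - (\<Sum>k<K. f2 (x i + real k * h) \<omega>) / real K)"
    using \<open>K > 0\<close> by simp
qed

theorem mainTheorem5:
  fixes M1 :: "'a measure" and M2 :: "'b measure"
    and f1 f1s f1n :: "real \<Rightarrow> 'a \<Rightarrow> real"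
    and f2 f2s f2n :: "real \<Rightarrow> 'b \<Rightarrow> real"
    and s1 s2 :: real
  assumes "noisy_process M1 f1 f1s f1n s1"
    and "noisy_process M2 f2 f2s f2n s2"
    and "\<forall>n x. inj_on x {..<n} \<longrightarrow> fin_distr M1 f1 n x = fin_distr M2 f2 n x"
  shows "\<forall>n x. inj_on x {..<n} \<longrightarrow>
           fin_distr M1 f1s n x = fin_distr M2 f2s n x \<and>
           fin_distr M1 f1n n x = fin_distr M2 f2n n x"
proof (intro allI impI)
  fix n and x :: "nat \<Rightarrow> real"
  assume "inj_on x {..<n}"
  then obtain h where h_pos: "\<And>m. h m > 0" and h_lim: "(\<lambda>m. real m * h m) \<longlonglongrightarrow> 0"
    and grid_inj: "\<And>m. inj_on (grid x (Suc m) (h m)) {..<n * Suc m}"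
    by (rule refining_grids_exist) blast
  note np1 = noisy_processD[OF assms(1)] and np2 = noisy_processD[OF assms(2)]
  note [measurable] = np1(3,4) np2(3,4) noisy_process_measurable[OF assms(1)] noisy_process_measurable[OF assms(2)]
  note averages_distr = grid_statistics_distr_eq[OF assms(3) noisy_process_measurable[OF assms(1)]
      noisy_process_measurable[OF assms(2)] grid_inj zero_less_Suc]
  note avg1 = noisy_process_grid_average_converges[OF assms(1) h_pos h_lim]
    and avg2 = noisy_process_grid_average_converges[OF assms(2) h_pos h_lim]
  have "fin_distr M1 f1s n x = fin_distr M2 f2s n x"
    unfolding fin_distr_def
  proof (rule distr_eq_if_converges_in_prob[OF np1(1) np2(1) _ _ _ _ averages_distr(1)])
    show "converges_in_prob M1 (\<lambda>m \<omega>. (\<Sum>k<Suc m. f1 (x i + real k * h m) \<omega>) / real (Suc m)) (f1s (x i))"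
      "converges_in_prob M2 (\<lambda>m \<omega>. (\<Sum>k<Suc m. f2 (x i + real k * h m) \<omega>) / real (Suc m)) (f2s (x i))" for i
      by (rule avg1 avg2)+
  qed measurable
  moreover have "fin_distr M1 f1n n x = fin_distr M2 f2n n x"
    unfolding fin_distr_def
  proof (rule distr_eq_if_converges_in_prob[OF np1(1) np2(1) _ _ _ _ averages_distr(2)])
    show "converges_in_prob M1 (\<lambda>m \<omega>. f1 (x i) \<omega> - (\<Sum>k<Suc m. f1 (x i + real k * h m) \<omega>) / real (Suc m))
        (f1n (x i))" for i
      using avg1 by (rule converges_in_prob_diff_left) (simp add: np1(5))
    show "converges_in_prob M2 (\<lambda>m \<omega>. f2 (x i) \<omega> - (\<Sum>k<Suc m. f2 (x i + real k * h m) \<omega>) / real (Suc m))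
        (f2n (x i))" for i
      using avg2 by (rule converges_in_prob_diff_left) (simp add: np2(5))
  qed measurable
  ultimately show "fin_distr M1 f1s n x = fin_distr M2 f2s n x \<and> fin_distr M1 f1n n x = fin_distr M2 f2n n x"
    by blast
qed

end
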